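(* Let $q>0$ and let $D^*>0$ be the unique positive root of $q-D(F_q+G_q)'(D)/(F_q+G_q)(D)=0$. Then $D^*\ge\sqrt{\max((q-1)/2,0)}$.
   Context: $F_q(y):=\int_0^\infty u^{q-1}e^{yu-u^2/2}\,\mathrm{d}u$ and $G_q(y):=F_q(-y)$ for $y\in\mathbb{R}$. It is known that such a unique positive root $D^*$ exists. Moreover, $\frac{\partial}{\partial D}\frac{D^q}{(F_q+G_q)(D)}>0$ if and only if $D<D^*$, for $D>0$. *)

theory Defs
  imports "HOL-Analysis.Analysis"
begin

definition F :: "real \<Rightarrow> real \<Rightarrow> real" where
  "F q y = (LBINT u:{0<..}. u powr (q - 1) * exp (y * u - u\<^sup>2 / 2))"

definition G :: "real \<Rightarrow> real \<Rightarrow> real" where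
  "G q y = F q (- y)"

end

theory Submission
  imports Defs "HOL-Real_Asymp.Real_Asymp"
begin

text \<open>
  Write M r c for the integral of u^r exp(c u - u^2/2) over u > 0, so that F q = M (q-1)
  and d/dc M r c = M (r+1) c. Integration by parts gives M (q+1) c = q M (q-1) c + c M q c.
  With S k = M (q-1+k) D + M (q-1+k) (-D), the critical-point equation reads
  q S 0 = D (M q D - M q (-D)), and the recurrence turns it into S 2 = 2 q S 0.
  Integrating u^(q-1) (u - t)^2 exp(\<plusminus>D u - u^2/2) gives S 2 - 2 t S 1 + t^2 S 0 \<ge> 0;
  for t = q/D this becomes q S 0 (2 D^2 - q) \<ge> 4 q D M q (-D) > 0, so 2 D^2 > q,
  which is stronger than the claim.
\<close>

definition gauss_moment :: "real \<Rightarrow> real \<Rightarrow> real" where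
  "gauss_moment r c = (LBINT u:{0<..}. u powr r * exp (c * u - u\<^sup>2 / 2))"

lemma F_eq_gauss_moment: "F q y = gauss_moment (q - 1) y"
  by (simp add: F_def gauss_moment_def)

lemma G_eq_gauss_moment: "G q y = gauss_moment (q - 1) (- y)"
  by (simp add: G_def F_eq_gauss_moment)

lemma set_integrable_powr_exp_neg:
  assumes "r > -1"
  shows "set_integrable lborel {0<..} (\<lambda>u::real. u powr r * exp (- u))"
proof -
  have "((\<lambda>t. t powr (r + 1 - 1) / exp t) has_integral Gamma (r + 1)) {0..}"
    using Gamma_integral_real[of "r + 1"] assms by simp
  then have "(\<lambda>t. t powr r * exp (- t)) integrable_on {0..}"
    by (auto simp: exp_minus field_simps)
  then have "(\<lambda>t. t powr r * exp (- t)) absolutely_integrable_on {0..}"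
    by (rule nonnegative_absolutely_integrable_1) auto
  then have "set_integrable lborel {0..} (\<lambda>t::real. t powr r * exp (- t))"
    unfolding set_integrable_def by (subst (asm) integrable_completion) (auto simp: set_integrable_def)
  then show ?thesis
    by (rule set_integrable_subset) auto
qed

lemma set_integrable_gauss_moment:
  assumes "r > -1"
  shows "set_integrable lborel {0<..} (\<lambda>u::real. u powr r * exp (c * u - u\<^sup>2 / 2))"
proof (rule set_integrable_bound)
  show "set_integrable lborel {0<..} (\<lambda>u. exp ((c + 1)\<^sup>2 / 2) * (u powr r * exp (- u)))"
    using set_integrable_powr_exp_neg[OF assms] by simp
  show "set_borel_measurable lborel {0<..} (\<lambda>u::real. u powr r * exp (c * u - u\<^sup>2 / 2))"
    unfolding set_borel_measurable_def by measurable
  show "AE u in lborel. u \<in> {0<..} \<longrightarrow> norm (u powr r * exp (c * u - u\<^sup>2 / 2))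
          \<le> norm (exp ((c + 1)\<^sup>2 / 2) * (u powr r * exp (- u)))"
  proof (intro AE_I2 impI)
    fix u :: real
    \<comment> \<open>complete the square: \<open>c u - u\<^sup>2/2 = (c + 1)\<^sup>2/2 - u - (u - (c + 1))\<^sup>2/2\<close>\<close>
    have "c * u - u\<^sup>2 / 2 \<le> (c + 1)\<^sup>2 / 2 + - u"
      using zero_le_power2[of "u - (c + 1)"] by (simp add: power2_eq_square algebra_simps)
    then have "exp (c * u - u\<^sup>2 / 2) \<le> exp ((c + 1)\<^sup>2 / 2) * exp (- u)"
      by (simp flip: exp_add)
    then show "norm (u powr r * exp (c * u - u\<^sup>2 / 2))
          \<le> norm (exp ((c + 1)\<^sup>2 / 2) * (u powr r * exp (- u)))"
      by (simp add: mult_left_mono mult.left_commute)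
  qed
qed

lemma gauss_moment_pos:
  assumes "r > -1"
  shows "gauss_moment r c > 0"
proof -
  let ?f = "\<lambda>u::real. indicator {0<..} u * (u powr r * exp (c * u - u\<^sup>2 / 2))"
  have int: "integrable lborel ?f"
    using set_integrable_gauss_moment[OF assms] by (simp add: set_integrable_def)
  have nonneg: "AE u in lborel. 0 \<le> ?f u"
    by (rule AE_I2) (simp add: indicator_def)
  have "\<not> (AE u in lborel. ?f u = 0)"
  proof
    assume "AE u in lborel. ?f u = 0"
    then have "AE u in lborel. u \<notin> {1..2::real}"
      by eventually_elim (auto simp: indicator_def)
    then have "{1..2::real} \<in> null_sets lborel"
      by (subst AE_iff_null_sets) auto
    then show False
      by (auto dest: null_setsD1)
  qed
  then have "integral\<^sup>L lborel ?f \<noteq> 0"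
    using integral_nonneg_eq_0_iff_AE[OF int nonneg] by simp
  moreover have "integral\<^sup>L lborel ?f \<ge> 0"
    using nonneg by (rule integral_nonneg_AE)
  ultimately have "integral\<^sup>L lborel ?f > 0"
    by linarith
  then show ?thesis
    by (simp add: gauss_moment_def set_lebesgue_integral_def)
qed

lemma gauss_moment_recurrence:
  assumes q: "q > 0"
  shows "gauss_moment (q + 1) c = q * gauss_moment (q - 1) c + c * gauss_moment q c"
proof -
  let ?e = "\<lambda>u::real. exp (c * u - u\<^sup>2 / 2)"
  let ?F = "\<lambda>u::real. u powr q * ?e u"
  let ?f = "\<lambda>u::real. q * (u powr (q - 1) * ?e u) + c * (u powr q * ?e u) - u powr (q + 1) * ?e u"
  have int: "set_integrable lborel {0<..} (\<lambda>u. u powr (q + k) * ?e u)" if "k \<ge> -1" for k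
    using set_integrable_gauss_moment[of "q + k" c] q that by simp
  have int_f: "set_integrable lborel {0<..} ?f"
    using int[of "-1"] int[of 0] int[of 1] by auto
  have einterval: "einterval 0 \<infinity> = {0<..}"
    by (auto simp: einterval_def)
  have "(LBINT u=0..\<infinity>. ?f u) = 0 - 0"
  proof (rule interval_integral_FTC_integrable)
    fix x :: real
    assume "0 < ereal x" "ereal x < \<infinity>"
    then have x: "x > 0"
      by simp
    have "(?F has_real_derivative q * x powr (q - 1) * ?e x + x powr q * (?e x * (c - x))) (at x)"
      using x by (auto intro!: derivative_eq_intros simp: power2_eq_square algebra_simps)
    moreover have "q * x powr (q - 1) * ?e x + x powr q * (?e x * (c - x)) = ?f x"
      using x by (simp add: powr_add algebra_simps)
    ultimately show "(?F has_vector_derivative ?f x) (at x)"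
      by (simp add: has_real_derivative_iff_has_vector_derivative)
    show "isCont ?f x"
      using x by (auto intro!: continuous_intros)
  next
    show "set_integrable lborel (einterval 0 \<infinity>) ?f"
      using int_f einterval by simp
    have "(?F \<longlongrightarrow> 0) (at_right 0)"
      using q by real_asymp
    then show "((?F \<circ> real_of_ereal) \<longlongrightarrow> 0) (at_right 0)"
      by (simp add: zero_ereal_def ereal_tendsto_simps1)
    have "(?F \<longlongrightarrow> 0) at_top"
      by real_asymp
    then show "((?F \<circ> real_of_ereal) \<longlongrightarrow> 0) (at_left \<infinity>)"
      by (simp add: ereal_tendsto_simps1)
  qed simp
  then have "(LBINT u:{0<..}. ?f u) = 0"
    using einterval by (simp add: interval_lebesgue_integral_def)
  moreover have "(LBINT u:{0<..}. ?f u) = q * gauss_moment (q - 1) c + c * gauss_moment q c - gauss_moment (q + 1) c"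
    unfolding gauss_moment_def using int[of "-1"] int[of 0] int[of 1]
    by (subst set_integral_diff(2)) (auto intro: set_integral_add)
  ultimately show ?thesis
    by simp
qed

lemma abs_exp_minus_one_minus_le: "\<bar>exp h - 1 - h\<bar> \<le> exp \<bar>h\<bar> * h\<^sup>2 / 2"
  for h :: real
proof -
  obtain t where t: "\<bar>t\<bar> \<le> \<bar>h\<bar>" "exp h = (\<Sum>m<2. h ^ m / fact m) + exp t / fact 2 * h ^ 2"
    using Maclaurin_exp_le[of h 2] by blast
  then have "\<bar>exp h - 1 - h\<bar> = exp t * h\<^sup>2 / 2"
    by (simp add: numeral_2_eq_2)
  also have "\<dots> \<le> exp \<bar>h\<bar> * h\<^sup>2 / 2"
    using t(1) by (intro divide_right_mono mult_right_mono) auto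
  finally show ?thesis .
qed

lemma gauss_integrand_taylor_bound:
  fixes u y c r :: real
  assumes u: "u > 0" and yc: "\<bar>y - c\<bar> \<le> 1"
  shows "\<bar>u powr r * exp (y * u - u\<^sup>2 / 2) - u powr r * exp (c * u - u\<^sup>2 / 2)
            - (y - c) * (u powr (r + 1) * exp (c * u - u\<^sup>2 / 2))\<bar>
         \<le> (y - c)\<^sup>2 / 2 * (u powr (r + 2) * exp ((\<bar>c\<bar> + 1) * u - u\<^sup>2 / 2))"
proof -
  define h where "h = (y - c) * u"
  define E where "E = u powr r * exp (c * u - u\<^sup>2 / 2)"
  have E: "E \<ge> 0"
    by (simp add: E_def)
  have "\<bar>h\<bar> \<le> u"
    unfolding h_def using yc u by (simp add: abs_mult mult_left_le_one_le)
  have "u powr r * exp (y * u - u\<^sup>2 / 2) - u powr r * exp (c * u - u\<^sup>2 / 2)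
          - (y - c) * (u powr (r + 1) * exp (c * u - u\<^sup>2 / 2))
        = E * (exp h - 1 - h)"
    using u by (simp add: E_def h_def powr_add algebra_simps flip: exp_add)
  also have "\<bar>\<dots>\<bar> = E * \<bar>exp h - 1 - h\<bar>"
    using E by (simp add: abs_mult)
  also have "\<dots> \<le> E * (exp \<bar>h\<bar> * h\<^sup>2 / 2)"
    by (rule mult_left_mono[OF abs_exp_minus_one_minus_le E])
  also have "\<dots> \<le> E * (exp u * h\<^sup>2 / 2)"
    using E \<open>\<bar>h\<bar> \<le> u\<close> by (intro mult_left_mono divide_right_mono mult_right_mono) auto
  also have "\<dots> = (y - c)\<^sup>2 / 2 * (u powr (r + 2) * exp ((c + 1) * u - u\<^sup>2 / 2))"
  proof -
    have "exp ((c + 1) * u - u\<^sup>2 / 2) = exp (c * u - u\<^sup>2 / 2) * exp u"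
      by (simp add: algebra_simps flip: exp_add)
    then show ?thesis
      using u by (simp add: E_def h_def powr_add power_mult_distrib mult_ac)
  qed
  also have "\<dots> \<le> (y - c)\<^sup>2 / 2 * (u powr (r + 2) * exp ((\<bar>c\<bar> + 1) * u - u\<^sup>2 / 2))"
    using u by (intro mult_left_mono) (auto simp: mult_right_mono)
  finally show ?thesis .
qed

lemma gauss_moment_taylor_bound:
  assumes r: "r > -1" and yc: "\<bar>y - c\<bar> \<le> 1"
  shows "\<bar>gauss_moment r y - gauss_moment r c - (y - c) * gauss_moment (r + 1) c\<bar>
           \<le> (y - c)\<^sup>2 * (gauss_moment (r + 2) (\<bar>c\<bar> + 1) / 2)"
proof -
  let ?a = "\<lambda>u::real. u powr r * exp (y * u - u\<^sup>2 / 2)"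
  let ?b = "\<lambda>u::real. u powr r * exp (c * u - u\<^sup>2 / 2)"
  let ?c = "\<lambda>u::real. (y - c) * (u powr (r + 1) * exp (c * u - u\<^sup>2 / 2))"
  let ?B = "\<lambda>u::real. (y - c)\<^sup>2 / 2 * (u powr (r + 2) * exp ((\<bar>c\<bar> + 1) * u - u\<^sup>2 / 2))"
  have int_a: "set_integrable lborel {0<..} ?a" and int_b: "set_integrable lborel {0<..} ?b"
    using r by (simp_all add: set_integrable_gauss_moment)
  have int_c: "set_integrable lborel {0<..} ?c"
    using set_integrable_gauss_moment[of "r + 1" c] r by simp
  have int_B: "set_integrable lborel {0<..} ?B"
    using set_integrable_gauss_moment[of "r + 2" "\<bar>c\<bar> + 1"] r by simp
  have int_ab: "set_integrable lborel {0<..} (\<lambda>u. ?a u - ?b u)"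
    using int_a int_b by auto
  have int_abc: "set_integrable lborel {0<..} (\<lambda>u. ?a u - ?b u - ?c u)"
    using int_ab int_c by auto
  have eq: "gauss_moment r y - gauss_moment r c - (y - c) * gauss_moment (r + 1) c
             = (LBINT u:{0<..}. ?a u - ?b u - ?c u)"
    unfolding gauss_moment_def using int_a int_b int_c int_ab
    by (simp add: set_integral_diff(2))
  have "\<bar>LBINT u:{0<..}. ?a u - ?b u - ?c u\<bar> \<le> (LBINT u:{0<..}. \<bar>?a u - ?b u - ?c u\<bar>)"
    using set_integral_norm_bound[OF int_abc] by simp
  also have "\<dots> \<le> (LBINT u:{0<..}. ?B u)"
    using gauss_integrand_taylor_bound[OF _ yc]
    by (intro set_integral_mono set_integrable_abs int_abc int_B) simp
  also have "\<dots> = (y - c)\<^sup>2 * (gauss_moment (r + 2) (\<bar>c\<bar> + 1) / 2)"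
    by (simp add: gauss_moment_def)
  finally show ?thesis
    unfolding eq .
qed

lemma gauss_moment_has_real_derivative:
  assumes r: "r > -1"
  shows "(gauss_moment r has_real_derivative gauss_moment (r + 1) c) (at c)"
proof -
  define C where "C = gauss_moment (r + 2) (\<bar>c\<bar> + 1) / 2"
  have "\<forall>\<^sub>F y in at c. y \<in> ball c 1"
    by (rule eventually_at_in_open') auto
  moreover have "\<forall>\<^sub>F y in at c. y \<noteq> c"
    by (rule eventually_neq_at_within)
  ultimately have "\<forall>\<^sub>F y in at c.
      norm ((gauss_moment r y - gauss_moment r c) / (y - c) - gauss_moment (r + 1) c) \<le> C * \<bar>y - c\<bar>"
  proof eventually_elim
    case (elim y)
    then have yc: "\<bar>y - c\<bar> \<le> 1" "y \<noteq> c"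
      by (auto simp: dist_real_def)
    have "norm ((gauss_moment r y - gauss_moment r c) / (y - c) - gauss_moment (r + 1) c)
          = \<bar>gauss_moment r y - gauss_moment r c - (y - c) * gauss_moment (r + 1) c\<bar> / \<bar>y - c\<bar>"
      using yc(2) by (simp add: field_simps)
    also have "\<dots> \<le> (y - c)\<^sup>2 * C / \<bar>y - c\<bar>"
      using gauss_moment_taylor_bound[OF r yc(1)] by (intro divide_right_mono) (auto simp: C_def)
    also have "\<dots> = C * \<bar>y - c\<bar>"
      using yc(2) by (simp add: power2_eq_square field_simps)
    finally show ?case .
  qed
  moreover have "((\<lambda>y. C * \<bar>y - c\<bar>) \<longlongrightarrow> C * \<bar>c - c\<bar>) (at c)"
    by (intro tendsto_intros)
  ultimately have "((\<lambda>y. (gauss_moment r y - gauss_moment r c) / (y - c) - gauss_moment (r + 1) c)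
                      \<longlongrightarrow> 0) (at c)"
    by (simp add: Lim_null_comparison)
  then show ?thesis
    by (simp add: has_field_derivative_iff Lim_null[symmetric])
qed

lemma gauss_moment_has_real_derivative_chain [derivative_intros]:
  assumes "r > -1" and "(f has_real_derivative f') (at x)"
  shows "((\<lambda>x. gauss_moment r (f x)) has_real_derivative gauss_moment (r + 1) (f x) * f') (at x)"
  using DERIV_chain2[OF gauss_moment_has_real_derivative[OF assms(1)] assms(2)] .

lemma gauss_moment_quadratic_nonneg:
  assumes r: "r > -1"
  shows "gauss_moment (r + 2) c - 2 * t * gauss_moment (r + 1) c + t\<^sup>2 * gauss_moment r c \<ge> 0"
proof -
  let ?m = "\<lambda>k u::real. u powr (r + k) * exp (c * u - u\<^sup>2 / 2)"
  have int: "set_integrable lborel {0<..} (?m k)" if "k \<ge> 0" for k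
    using set_integrable_gauss_moment[of "r + k" c] r that by simp
  have "gauss_moment (r + 2) c - 2 * t * gauss_moment (r + 1) c + t\<^sup>2 * gauss_moment r c
        = (LBINT u:{0<..}. ?m 2 u - 2 * t * ?m 1 u + t\<^sup>2 * ?m 0 u)"
    unfolding gauss_moment_def using int[of 0] int[of 1] int[of 2]
    by (simp add: set_integral_add(2) set_integral_diff(2))
  also have "\<dots> = (LBINT u:{0<..}. ?m 0 u * (u - t)\<^sup>2)"
    by (intro set_lebesgue_integral_cong)
       (auto simp: powr_add power2_eq_square algebra_simps)
  also have "\<dots> \<ge> 0"
    unfolding set_lebesgue_integral_def by (intro integral_nonneg_AE AE_I2) (simp add: indicator_def)
  finally show ?thesis .
qed

lemma gauss_moment_critical_point_gt:
  assumes q: "q > 0" and D: "D > 0"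
    and critical: "q * (gauss_moment (q - 1) D + gauss_moment (q - 1) (- D))
                     = D * (gauss_moment q D - gauss_moment q (- D))"
  shows "q < 2 * D\<^sup>2"
proof -
  define S0 where "S0 = gauss_moment (q - 1) D + gauss_moment (q - 1) (- D)"
  define A where "A = gauss_moment q D"
  define B where "B = gauss_moment q (- D)"
  define S2 where "S2 = gauss_moment (q + 1) D + gauss_moment (q + 1) (- D)"
  define t where "t = q / D"
  have "q - 1 > -1"
    using q by simp
  then have S0: "S0 > 0"
    by (simp add: S0_def add_pos_pos gauss_moment_pos)
  have B: "B > 0"
    using q by (simp add: B_def gauss_moment_pos)
  have critical: "q * S0 = D * (A - B)"
    using critical by (simp add: S0_def A_def B_def)
  have S2: "S2 = 2 * q * S0"
    using critical gauss_moment_recurrence[OF q, of D] gauss_moment_recurrence[OF q, of "- D"]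
    by (simp add: S0_def A_def B_def S2_def algebra_simps)
  have "0 \<le> S2 - 2 * t * (A + B) + t\<^sup>2 * S0"
    using gauss_moment_quadratic_nonneg[OF \<open>q - 1 > -1\<close>, of D t]
          gauss_moment_quadratic_nonneg[OF \<open>q - 1 > -1\<close>, of "- D" t]
    by (simp add: S0_def A_def B_def S2_def algebra_simps)
  also have "D\<^sup>2 * (S2 - 2 * t * (A + B) + t\<^sup>2 * S0)
             = D\<^sup>2 * S2 - 2 * q * (D * (A - B)) - 4 * q * D * B + q\<^sup>2 * S0"
    using D by (simp add: t_def power2_eq_square field_simps)
  also have "\<dots> = q * S0 * (2 * D\<^sup>2 - q) - 4 * q * D * B"
    unfolding S2 critical[symmetric] by (simp add: power2_eq_square algebra_simps)
  finally have "4 * q * D * B \<le> q * S0 * (2 * D\<^sup>2 - q)"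
    using D by (simp add: zero_le_mult_iff)
  moreover have "4 * q * D * B > 0"
    using q D B by simp
  ultimately have "q * S0 * (2 * D\<^sup>2 - q) > 0"
    by linarith
  then show ?thesis
    using mult_pos_pos[OF q S0] by (auto simp: zero_less_mult_iff)
qed

theorem lemma2p3:
  fixes q Dstar :: real
  assumes "q > 0"
    and "Dstar > 0"
    and "\<forall>D>0. (q - D * deriv (\<lambda>y. F q y + G q y) D / (F q D + G q D) = 0 \<longleftrightarrow> D = Dstar)"
  shows "Dstar \<ge> sqrt (max ((q - 1) / 2) 0)"
proof -
  have F_plus_G: "(\<lambda>y. F q y + G q y) = (\<lambda>y. gauss_moment (q - 1) y + gauss_moment (q - 1) (- y))"
    by (simp add: F_eq_gauss_moment G_eq_gauss_moment)
  have deriv: "deriv (\<lambda>y. F q y + G q y) Dstar = gauss_moment q Dstar - gauss_moment q (- Dstar)"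
    unfolding F_plus_G using assms(1) by (intro DERIV_imp_deriv) (auto intro!: derivative_eq_intros)
  have "q - Dstar * deriv (\<lambda>y. F q y + G q y) Dstar / (F q Dstar + G q Dstar) = 0"
    using assms(2,3) by blast
  then have "q - Dstar * (gauss_moment q Dstar - gauss_moment q (- Dstar))
                / (gauss_moment (q - 1) Dstar + gauss_moment (q - 1) (- Dstar)) = 0"
    unfolding deriv by (simp only: F_eq_gauss_moment G_eq_gauss_moment)
  moreover have "gauss_moment (q - 1) Dstar + gauss_moment (q - 1) (- Dstar) > 0"
    using assms(1) by (simp add: add_pos_pos gauss_moment_pos)
  ultimately have "q * (gauss_moment (q - 1) Dstar + gauss_moment (q - 1) (- Dstar))
                   = Dstar * (gauss_moment q Dstar - gauss_moment q (- Dstar))"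
    by (simp add: field_simps)
  then have "q / 2 < Dstar\<^sup>2"
    using gauss_moment_critical_point_gt assms(1,2) by fastforce
  then have "max ((q - 1) / 2) 0 \<le> Dstar\<^sup>2"
    using assms(1) by simp
  then show ?thesis
    using assms(2) by (simp add: real_le_lsqrt)
qed

end
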